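(* Let $\Sigma$ be a finite alphabet. For every formula $\phi\in\mathbf{LTL}(\mathbf{F},\wedge)$ over $\Sigma$, either $\phi$ is equivalent to false (no nonempty word satisfies it), or there exist a finite set of non-repeating words $w_1,\dots,w_p\in\Sigma^*$ and $c\in\Sigma\cup\{\varepsilon\}$ such that for every nonempty word $z$: $z\models\phi$ if and only if every $w_q$ ($q\in[1,p]$) is a subword of $z$ and $z$ starts with $c$ (the latter condition being vacuous when $c=\varepsilon$).
   Context: Words are nonempty and indexed from position 1. $\mathbf{LTL}(\mathbf{F},\wedge)$: formulas built from atomic formulas $c\in\Sigma$, conjunction $\wedge$ and the eventually operator $\mathbf{F}$. Semantics on a word $w$ of length $\ell$ at position $i\in[1,\ell]$: $w,i\models c$ iff $w(i)=c$; $\wedge$ as usual; $w,i\models\mathbf{F}\phi$ iff $w,i'\models\phi$ for some $i'\in[i,\ell]$; $w\models\phi$ iff $w,1\models\phi$. A word $u=u(1)\cdots u(\ell')$ is a subword of $v=v(1)\cdots v(\ell)$ if there is a strictly increasing $f:[1,\ell']\to[1,\ell]$ with $v(f(i))=u(i)$ for all $i$ (scattered subsequence). A word is non-repeating if any two consecutive letters are different. *)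

theory Defs
  imports Main "HOL-Library.Sublist"
begin

datatype 'a ltl = Atom 'a | Conj "'a ltl" "'a ltl" | Ev "'a ltl"

text \<open>Words are lists; position i (1-indexed as in the paper) is w ! (i - 1).
  sat w i phi means w, i |= phi, meaningful for 1 <= i <= length w.\<close>
fun sat :: "'a list \<Rightarrow> nat \<Rightarrow> 'a ltl \<Rightarrow> bool" where
  "sat w i (Atom c) = (w ! (i - 1) = c)"
| "sat w i (Conj p q) = (sat w i p \<and> sat w i q)"
| "sat w i (Ev p) = (\<exists>i'. i \<le> i' \<and> i' \<le> length w \<and> sat w i' p)"

definition models :: "'a list \<Rightarrow> 'a ltl \<Rightarrow> bool" where
  "models w phi \<longleftrightarrow> sat w 1 phi"

definition subword :: "'a list \<Rightarrow> 'a list \<Rightarrow> bool" where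
  "subword u v \<longleftrightarrow> (\<exists>f. strict_mono_on {1..length u} f \<and>
      (\<forall>i\<in>{1..length u}. 1 \<le> f i \<and> f i \<le> length v \<and> v ! (f i - 1) = u ! (i - 1)))"

definition non_repeating :: "'a list \<Rightarrow> bool" where
  "non_repeating w \<longleftrightarrow> (\<forall>i. Suc i < length w \<longrightarrow> w ! i \<noteq> w ! Suc i)"

text \<open>c = None encodes epsilon (no condition); c = Some a means the word starts with a.\<close>
definition starts_with :: "'a option \<Rightarrow> 'a list \<Rightarrow> bool" where
  "starts_with c z \<longleftrightarrow> (case c of None \<Rightarrow> True | Some a \<Rightarrow> z \<noteq> [] \<and> hd z = a)"

end

theory Submission
  imports Defs
begin

text \<open>Read on the suffix starting at the current position, \<open>F\<close> means "some nonempty suffix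
  satisfies", and by induction every satisfiable formula is described by a finite set of required
  subwords together with an optional first letter.  Conjunction takes the union of the subword sets
  and intersects the first-letter conditions.  If \<open>\<phi>\<close> imposes no first letter, \<open>F \<phi>\<close> is
  equivalent to \<open>\<phi>\<close>, because subword conditions pass from a suffix to the whole word.  For \<open>F \<phi>\<close> with \<open>\<phi>\<close> requiring the first letter
  \<open>a\<close> it suffices to look at the suffix from the first occurrence of \<open>a\<close>; a word \<open>w\<close> is a subword
  of that suffix iff \<open>a w\<close> (or just \<open>w\<close>, if \<open>w\<close> already starts with \<open>a\<close>) is a subword of the
  whole word.  This prepending keeps the required subwords non-repeating.\<close>

fun holds :: "'a list \<Rightarrow> 'a ltl \<Rightarrow> bool" where
  "holds z (Atom c) \<longleftrightarrow> z \<noteq> [] \<and> hd z = c"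
| "holds z (Conj p q) \<longleftrightarrow> holds z p \<and> holds z q"
| "holds z (Ev p) \<longleftrightarrow> (\<exists>k<length z. holds (drop k z) p)"

lemma sat_iff_holds_drop:
  "1 \<le> i \<Longrightarrow> i \<le> length w \<Longrightarrow> sat w i phi \<longleftrightarrow> holds (drop (i - 1) w) phi"
proof (induction phi arbitrary: i)
  case (Atom x)
  then show ?case by (auto simp: hd_drop_conv_nth)
next
  case (Conj p q)
  then show ?case by simp
next
  case (Ev p)
  have "sat w i (Ev p) \<longleftrightarrow> (\<exists>k<length w - (i - 1). sat w (k + i) p)"
  proof
    assume "sat w i (Ev p)"
    then obtain i' where "i \<le> i'" "i' \<le> length w" "sat w i' p" by auto
    then show "\<exists>k<length w - (i - 1). sat w (k + i) p"
      using Ev.prems by (intro exI[of _ "i' - i"]) auto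
  next
    assume "\<exists>k<length w - (i - 1). sat w (k + i) p"
    then obtain k where "k < length w - (i - 1)" "sat w (k + i) p" by blast
    then show "sat w i (Ev p)" using Ev.prems by (auto intro!: exI[of _ "k + i"])
  qed
  also have "\<dots> \<longleftrightarrow> (\<exists>k<length w - (i - 1). holds (drop k (drop (i - 1) w)) p)"
    using Ev by (intro ex_cong1) (auto simp: add.commute)
  finally show ?case by simp
qed

lemma models_iff_holds: "z \<noteq> [] \<Longrightarrow> models z phi \<longleftrightarrow> holds z phi"
  unfolding models_def using sat_iff_holds_drop[of 1 z phi] by (cases z) auto

lemma subword_Nil_left: "subword [] v"
  by (simp add: subword_def)

lemma subword_Nil_right: "subword u [] \<longleftrightarrow> u = []"
  unfolding subword_def by (cases u) auto

lemma subword_ConsI: "subword u ys \<Longrightarrow> subword u (y # ys)"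
proof -
  assume "subword u ys"
  then obtain f where "strict_mono_on {1..length u} f"
    "\<forall>i\<in>{1..length u}. 1 \<le> f i \<and> f i \<le> length ys \<and> ys ! (f i - 1) = u ! (i - 1)"
    by (auto simp: subword_def)
  then show ?thesis
    unfolding subword_def by (intro exI[of _ "\<lambda>i. Suc (f i)"]) (auto simp: strict_mono_on_def)
qed

lemma subword_Cons_ConsI: "subword xs ys \<Longrightarrow> subword (x # xs) (x # ys)"
proof -
  assume "subword xs ys"
  then obtain f where f: "strict_mono_on {1..length xs} f"
    "\<forall>i\<in>{1..length xs}. 1 \<le> f i \<and> f i \<le> length ys \<and> ys ! (f i - 1) = xs ! (i - 1)"
    by (auto simp: subword_def)
  define g where "g i = (if i = 1 then 1 else Suc (f (i - 1)))" for i
  have "strict_mono_on {1..length (x # xs)} g"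
    unfolding strict_mono_on_def
  proof (intro allI impI)
    fix r s assume rs: "r \<in> {1..length (x # xs)} \<and> s \<in> {1..length (x # xs)} \<and> r < s"
    show "g r < g s"
    proof (cases "r = 1")
      case True
      have "s - 1 \<in> {1..length xs}" using rs True by auto
      then have "1 \<le> f (s - 1)" using f(2) by blast
      then show ?thesis using rs True by (simp add: g_def)
    next
      case False
      then have "f (r - 1) < f (s - 1)"
        using rs by (intro strict_mono_onD[OF f(1)]) auto
      then show ?thesis using False rs by (simp add: g_def)
    qed
  qed
  moreover have "1 \<le> g i \<and> g i \<le> length (x # ys) \<and> (x # ys) ! (g i - 1) = (x # xs) ! (i - 1)"
    if i: "i \<in> {1..length (x # xs)}" for i
  proof (cases "i = 1")
    case True
    then show ?thesis by (simp add: g_def)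
  next
    case False
    then obtain j where j: "i = Suc j" "j \<in> {1..length xs}" using i by (cases i) auto
    then have "1 \<le> f j \<and> f j \<le> length ys \<and> ys ! (f j - 1) = xs ! (j - 1)" using f(2) by blast
    then show ?thesis using j by (auto simp: g_def nth_Cons')
  qed
  ultimately show ?thesis unfolding subword_def by blast
qed

lemma subword_Cons_ConsD:
  assumes "subword (x # xs) (y # ys)"
  shows "subword (x # xs) ys \<or> (x = y \<and> subword xs ys)"
proof -
  obtain f where mono: "strict_mono_on {1..length (x # xs)} f"
    and f: "\<And>i. i \<in> {1..length (x # xs)} \<Longrightarrow>
      1 \<le> f i \<and> f i \<le> length (y # ys) \<and> (y # ys) ! (f i - 1) = (x # xs) ! (i - 1)"
    using assms by (auto simp: subword_def)
  have f_ge: "f 1 \<le> f i" if "i \<in> {1..length (x # xs)}" for i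
    using strict_mono_onD[OF mono, of 1 i] that by (cases "i = 1") auto
  show ?thesis
  proof (cases "f 1 = 1")
    case True
    define g where "g j = f (Suc j) - 1" for j
    have "strict_mono_on {1..length xs} g"
      unfolding strict_mono_on_def g_def
    proof (intro allI impI)
      fix r s assume rs: "r \<in> {1..length xs} \<and> s \<in> {1..length xs} \<and> r < s"
      then have "f 1 < f (Suc r)" "f (Suc r) < f (Suc s)"
        by (auto intro: strict_mono_onD[OF mono])
      then show "f (Suc r) - 1 < f (Suc s) - 1" by linarith
    qed
    moreover have "1 \<le> g j \<and> g j \<le> length ys \<and> ys ! (g j - 1) = xs ! (j - 1)"
      if j: "j \<in> {1..length xs}" for j
    proof -
      have "f 1 < f (Suc j)" using j by (auto intro: strict_mono_onD[OF mono])
      moreover have "f (Suc j) \<le> length (y # ys) \<and> (y # ys) ! (f (Suc j) - 1) = (x # xs) ! j"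
        using f[of "Suc j"] j by auto
      ultimately show ?thesis using True j by (auto simp: g_def nth_Cons')
    qed
    moreover have "x = y" using f[of 1] True by simp
    ultimately show ?thesis unfolding subword_def by blast
  next
    case False
    define g where "g i = f i - 1" for i
    have "strict_mono_on {1..length (x # xs)} g"
      unfolding strict_mono_on_def g_def
    proof (intro allI impI)
      fix r s assume rs: "r \<in> {1..length (x # xs)} \<and> s \<in> {1..length (x # xs)} \<and> r < s"
      then have "f 1 \<le> f r" "f r < f s" using f_ge by (auto intro: strict_mono_onD[OF mono])
      then show "f r - 1 < f s - 1" using f[of 1] False by auto
    qed
    moreover have "1 \<le> g i \<and> g i \<le> length ys \<and> ys ! (g i - 1) = (x # xs) ! (i - 1)"
      if i: "i \<in> {1..length (x # xs)}" for i
      using f[OF i] f_ge[OF i] f[of 1] False by (auto simp: g_def nth_Cons')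
    ultimately show ?thesis unfolding subword_def by blast
  qed
qed

lemma subword_Cons_Cons_iff:
  "subword (x # xs) (y # ys) \<longleftrightarrow> subword (x # xs) ys \<or> (x = y \<and> subword xs ys)"
  using subword_Cons_ConsD subword_ConsI subword_Cons_ConsI by metis

lemma subword_iff_subseq: "subword u v \<longleftrightarrow> subseq u v"
proof (induction v arbitrary: u)
  case Nil
  show ?case by (cases u) (simp_all add: subword_Nil_right)
next
  case (Cons y ys)
  then show ?case
    by (cases u) (auto simp: subword_Nil_left subword_Cons_Cons_iff dest: subseq_Cons')
qed

definition satisfiable :: "'a ltl \<Rightarrow> bool" where
  "satisfiable phi \<longleftrightarrow> (\<exists>z. z \<noteq> [] \<and> holds z phi)"

definition normal_form :: "'a list set \<Rightarrow> 'a option \<Rightarrow> 'a ltl \<Rightarrow> bool" where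
  "normal_form W c phi \<longleftrightarrow> finite W \<and> (\<forall>w\<in>W. non_repeating w) \<and>
     (\<forall>z. z \<noteq> [] \<longrightarrow> (holds z phi \<longleftrightarrow> (\<forall>w\<in>W. subseq w z) \<and> starts_with c z))"

lemma normal_form_Atom: "normal_form {} (Some a) (Atom a)"
  by (auto simp: normal_form_def starts_with_def)

lemma starts_with_conj_cases:
  "(\<forall>z. \<not> (starts_with c1 z \<and> starts_with c2 z)) \<or>
   (\<exists>c. \<forall>z. starts_with c z \<longleftrightarrow> starts_with c1 z \<and> starts_with c2 z)"
proof (cases "\<exists>a b. c1 = Some a \<and> c2 = Some b \<and> a \<noteq> b")
  case True
  then show ?thesis by (auto simp: starts_with_def)
next
  case False
  then have "\<forall>z. starts_with (case c1 of None \<Rightarrow> c2 | Some _ \<Rightarrow> c1) z \<longleftrightarrow>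
      starts_with c1 z \<and> starts_with c2 z"
    by (auto simp: starts_with_def split: option.splits)
  then show ?thesis by blast
qed

lemma normal_form_Conj:
  assumes p: "normal_form W1 c1 p" and q: "normal_form W2 c2 q"
    and sat: "satisfiable (Conj p q)"
  shows "\<exists>c. normal_form (W1 \<union> W2) c (Conj p q)"
proof -
  have holds_Conj: "holds z (Conj p q) \<longleftrightarrow>
      (\<forall>w\<in>W1 \<union> W2. subseq w z) \<and> starts_with c1 z \<and> starts_with c2 z" if "z \<noteq> []" for z
    using p q that by (auto simp: normal_form_def)
  obtain c where "\<forall>z. starts_with c z \<longleftrightarrow> starts_with c1 z \<and> starts_with c2 z"
    using starts_with_conj_cases[of c1 c2] sat holds_Conj by (auto simp: satisfiable_def)
  then have "normal_form (W1 \<union> W2) c (Conj p q)"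
    using p q holds_Conj by (auto simp: normal_form_def)
  then show ?thesis ..
qed

lemma subseq_drop_rightD: "subseq w (drop k z) \<Longrightarrow> subseq w z"
  using subseq_order.trans[OF _ suffix_imp_subseq[OF suffix_drop]] .

lemma normal_form_Ev_None:
  assumes nf: "normal_form W None p"
  shows "normal_form W None (Ev p)"
proof -
  have "holds z (Ev p) \<longleftrightarrow> (\<forall>w\<in>W. subseq w z)" if "z \<noteq> []" for z
  proof
    assume "holds z (Ev p)"
    then obtain k where "k < length z" "holds (drop k z) p" by auto
    then show "\<forall>w\<in>W. subseq w z"
      using nf by (auto simp: normal_form_def starts_with_def intro: subseq_drop_rightD)
  next
    assume "\<forall>w\<in>W. subseq w z"
    then have "holds (drop 0 z) p" using nf that by (simp add: normal_form_def starts_with_def)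
    then show "holds z (Ev p)" using that by auto
  qed
  then show ?thesis using nf by (auto simp: normal_form_def starts_with_def)
qed

definition cons_unless_hd :: "'a \<Rightarrow> 'a list \<Rightarrow> 'a list" where
  "cons_unless_hd a w = (if w \<noteq> [] \<and> hd w = a then w else a # w)"

lemma non_repeating_cons_unless_hd: "non_repeating w \<Longrightarrow> non_repeating (cons_unless_hd a w)"
  unfolding cons_unless_hd_def non_repeating_def
  by (auto simp: nth_Cons split: nat.splits) (metis hd_conv_nth list.size(3) not_less0)

lemma suffix_drop_dropWhile_neq:
  "k < length z \<Longrightarrow> z ! k = a \<Longrightarrow> suffix (drop k z) (dropWhile (\<lambda>x. x \<noteq> a) z)"
proof (induction z arbitrary: k)
  case Nil
  then show ?case by simp
next
  case (Cons y ys)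
  show ?case
  proof (cases "y = a")
    case True
    then show ?thesis using suffix_drop[of k "y # ys"] by simp
  next
    case False
    then obtain j where "k = Suc j" using Cons.prems by (cases k) auto
    then show ?thesis using Cons False by simp
  qed
qed

lemma ex_drop_iff_dropWhile_neq:
  assumes mono: "\<And>s t. P s \<Longrightarrow> suffix s t \<Longrightarrow> P t"
  shows "(\<exists>k<length z. z ! k = a \<and> P (drop k z)) \<longleftrightarrow> a \<in> set z \<and> P (dropWhile (\<lambda>x. x \<noteq> a) z)"
proof
  assume "\<exists>k<length z. z ! k = a \<and> P (drop k z)"
  then obtain k where "k < length z" "z ! k = a" "P (drop k z)" by blast
  then show "a \<in> set z \<and> P (dropWhile (\<lambda>x. x \<noteq> a) z)"
    using mono suffix_drop_dropWhile_neq nth_mem by metis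
next
  assume a: "a \<in> set z \<and> P (dropWhile (\<lambda>x. x \<noteq> a) z)"
  define k where "k = length (takeWhile (\<lambda>x. x \<noteq> a) z)"
  have dw: "dropWhile (\<lambda>x. x \<noteq> a) z = drop k z"
    by (simp add: k_def dropWhile_eq_drop)
  have "dropWhile (\<lambda>x. x \<noteq> a) z \<noteq> []" using a by (simp add: dropWhile_eq_Nil_conv)
  then have "k < length z" "z ! k = a"
    using hd_dropWhile[of "\<lambda>x. x \<noteq> a" z] by (auto simp: dw hd_drop_conv_nth)
  then show "\<exists>k<length z. z ! k = a \<and> P (drop k z)" using a dw by auto
qed

lemma subseq_dropWhile_neq: "subseq (a # w) z \<Longrightarrow> subseq (a # w) (dropWhile (\<lambda>x. x \<noteq> a) z)"
  by (induction z) auto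

lemma subseq_dropWhile_neq_iff:
  assumes "a \<in> set z"
  shows "subseq w (dropWhile (\<lambda>x. x \<noteq> a) z) \<longleftrightarrow> subseq (cons_unless_hd a w) z"
proof -
  have ne: "dropWhile (\<lambda>x. x \<noteq> a) z \<noteq> []" using assms by (simp add: dropWhile_eq_Nil_conv)
  with hd_dropWhile[OF ne] obtain r where r: "dropWhile (\<lambda>x. x \<noteq> a) z = a # r"
    by (cases "dropWhile (\<lambda>x. x \<noteq> a) z") simp_all
  have "subseq (a # r) z" unfolding r[symmetric] by (rule suffix_imp_subseq[OF suffix_dropWhile])
  then have to_z: "subseq u (a # r) \<Longrightarrow> subseq u z" for u
    using subseq_order.trans by blast
  have from_z: "subseq (a # u) z \<Longrightarrow> subseq (a # u) (a # r)" for u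
    using subseq_dropWhile_neq[of a u z] by (simp only: r)
  show ?thesis
  proof (cases "w \<noteq> [] \<and> hd w = a")
    case True
    then obtain u where w: "w = a # u" by (metis list.collapse)
    show ?thesis
      unfolding r cons_unless_hd_def w using to_z[of "a # u"] from_z[of u] by auto
  next
    case False
    then have "subseq w (a # r) \<longleftrightarrow> subseq (a # w) (a # r)" by (cases w) auto
    then show ?thesis
      unfolding r cons_unless_hd_def using False to_z[of "a # w"] from_z[of w] by auto
  qed
qed

lemma normal_form_Ev_Some:
  assumes nf: "normal_form W (Some a) p"
  shows "normal_form (insert [a] (cons_unless_hd a ` W)) None (Ev p)"
proof -
  let ?P = "\<lambda>s. \<forall>w\<in>W. subseq w s"
  have "holds z (Ev p) \<longleftrightarrow> (\<forall>w\<in>insert [a] (cons_unless_hd a ` W). subseq w z)" for z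
  proof -
    have "holds z (Ev p) \<longleftrightarrow> (\<exists>k<length z. z ! k = a \<and> ?P (drop k z))"
      using nf by (auto simp: normal_form_def starts_with_def hd_drop_conv_nth)
    also have "\<dots> \<longleftrightarrow> a \<in> set z \<and> ?P (dropWhile (\<lambda>x. x \<noteq> a) z)"
      by (rule ex_drop_iff_dropWhile_neq) (blast intro: subseq_order.trans suffix_imp_subseq)
    also have "\<dots> \<longleftrightarrow> (\<forall>w\<in>insert [a] (cons_unless_hd a ` W). subseq w z)"
      by (auto simp: subseq_singleton_left subseq_dropWhile_neq_iff)
    finally show ?thesis .
  qed
  moreover have "finite (insert [a] (cons_unless_hd a ` W))" using nf by (simp add: normal_form_def)
  moreover have "\<forall>w\<in>insert [a] (cons_unless_hd a ` W). non_repeating w"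
    using nf by (auto simp: normal_form_def intro: non_repeating_cons_unless_hd)
      (simp add: non_repeating_def)
  ultimately show ?thesis by (simp add: normal_form_def starts_with_def)
qed

lemma satisfiable_normal_form: "satisfiable phi \<Longrightarrow> \<exists>W c. normal_form W c phi"
proof (induction phi)
  case (Atom a)
  show ?case using normal_form_Atom by (intro exI)
next
  case (Conj p q)
  then have "satisfiable p" "satisfiable q" by (auto simp: satisfiable_def)
  then show ?case using Conj normal_form_Conj by blast
next
  case (Ev p)
  then obtain z k where "k < length z" "holds (drop k z) p" by (auto simp: satisfiable_def)
  then have "satisfiable p" unfolding satisfiable_def by (intro exI[of _ "drop k z"]) simp
  then obtain W c where nf: "normal_form W c p" using Ev.IH by blast
  show ?case
  proof (cases c)
    case None
    then show ?thesis using nf normal_form_Ev_None by blast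
  next
    case (Some a)
    then show ?thesis using nf normal_form_Ev_Some by metis
  qed
qed

theorem lemma2:
  fixes phi :: "'a::finite ltl"
  shows "(\<forall>z. z \<noteq> [] \<longrightarrow> \<not> models z phi) \<or>
         (\<exists>W :: 'a list set. \<exists>c :: 'a option. finite W \<and> (\<forall>w\<in>W. non_repeating w) \<and>
            (\<forall>z. z \<noteq> [] \<longrightarrow> (models z phi \<longleftrightarrow> (\<forall>w\<in>W. subword w z) \<and> starts_with c z)))"
proof (cases "satisfiable phi")
  case True
  then obtain W c where "normal_form W c phi" using satisfiable_normal_form by blast
  then show ?thesis
    unfolding normal_form_def by (auto simp: models_iff_holds subword_iff_subseq)
next
  case False
  then show ?thesis by (auto simp: satisfiable_def models_iff_holds)
qed

end
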